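(* In the polar Brauer category $\mathcal{AB}(\delta)$ (over a commutative ring $K$, $\delta\in K$), the identity $[\mathbb H_{01}+\mathbb H_{02},\mathbb H_{12}]=0$ holds in $\mathrm{End}_{\mathcal{AB}(\delta)}(2)$.
   Context: Let $K$ be a commutative ring and $\delta\in K$. The Brauer category $\mathcal B(\delta)$ has objects $\mathbb N$; $\mathrm{Hom}_{\mathcal B(\delta)}(r,s)$ is the free $K$-module on Brauer $(r,s)$-diagrams; composition $BA$ (first $A$, then $B$) is stacking with closed loops replaced by a factor $\delta$; $\otimes$ is juxtaposition. $I$ is the identity of $1$, $I_r=I^{\otimes r}$, $X$ the crossing, $\cap:2\to0$ the cap, $\cup:0\to2$ the cup, $H=X-\cup\circ\cap$. The polar Brauer category $\mathcal{AB}(\delta)$ is the $K$-linear category with objects $\mathbb N$ generated, under composition and the right action $\mathbb D\mapsto\mathbb D\otimes B$ of morphisms $B$ of $\mathcal B(\delta)$ (juxtaposing $B$ on the right; $\mathbb D:r\to s$, $B:k\to\ell$ give $\mathbb D\otimes B:r+k\to s+\ell$), by $\mathbb I_0$ (a vertical pole, identity of $0$) and $\mathbb H:1\to1$ (pole joined by a horizontal connector to one thin strand), subject to: (i) $(\mathbb I_0\otimes B)(\mathbb I_0\otimes A)=\mathbb I_0\otimes BA$, $(\mathbb H\otimes B)(\mathbb I_1\otimes A)=(\mathbb I_1\otimes B)(\mathbb H\otimes A)=\mathbb H\otimes BA$, with $\mathbb I_r=\mathbb I_0\otimes I_r$; (ii) $[\mathbb H_{01},\mathbb H_{02}+\mathbb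 H_{12}]=0$ with $[a,b]=ab-ba$, $\mathbb H_{01}=\mathbb H\otimes I$, $\mathbb X_0=\mathbb I_0\otimes X$, $\mathbb H_{02}=\mathbb X_0\mathbb H_{01}\mathbb X_0$, $\mathbb H_{12}=\mathbb I_0\otimes H$; (iii) $\mathbb H^T=-\mathbb H$ where $\mathbb D^T=(\mathbb I_0\otimes\cap\otimes I)(\mathbb D\otimes X)(\mathbb I_0\otimes\cup\otimes I)$ for $\mathbb D:1\to1$; relations are imposed in all composites and right tensor products. Products of morphisms denote composition. *)

theory Defs
  imports Main "HOL.Modules"
begin

text \<open>Points of an (r,s)-diagram: Inl i is the i-th source (bottom) point (i < r),
  Inr j is the j-th target (top) point (j < s), numbered from left to right.
  A diagram is stored as a symmetric edge relation (a perfect matching).\<close>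

type_synonym bpt = "nat + nat"

datatype bdiag = BDiag (bsrc: nat) (btgt: nat) (bedges: "(bpt \<times> bpt) set")

definition bpoints :: "nat \<Rightarrow> nat \<Rightarrow> bpt set" where
  "bpoints r s = Inl ` {..<r} \<union> Inr ` {..<s}"

definition is_brauer :: "bdiag \<Rightarrow> bool" where
  "is_brauer d \<longleftrightarrow>
     bedges d \<subseteq> bpoints (bsrc d) (btgt d) \<times> bpoints (bsrc d) (btgt d) \<and>
     (\<forall>p q. (p, q) \<in> bedges d \<longrightarrow> (q, p) \<in> bedges d) \<and>
     (\<forall>p. (p, p) \<notin> bedges d) \<and>
     (\<forall>p \<in> bpoints (bsrc d) (btgt d). \<exists>!q. (p, q) \<in> bedges d)"

text \<open>Stacking B on top of A (first A, then B).\<close>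

datatype pt3 = Bot nat | Mid nat | Top nat

definition lower_pt :: "bpt \<Rightarrow> pt3" where
  "lower_pt p = (case p of Inl i \<Rightarrow> Bot i | Inr j \<Rightarrow> Mid j)"

definition upper_pt :: "bpt \<Rightarrow> pt3" where
  "upper_pt p = (case p of Inl j \<Rightarrow> Mid j | Inr k \<Rightarrow> Top k)"

definition outer_pt :: "bpt \<Rightarrow> pt3" where
  "outer_pt p = (case p of Inl i \<Rightarrow> Bot i | Inr k \<Rightarrow> Top k)"

definition stack_conn :: "bdiag \<Rightarrow> bdiag \<Rightarrow> (pt3 \<times> pt3) set" where
  "stack_conn B A =
     (map_prod lower_pt lower_pt ` bedges A \<union> map_prod upper_pt upper_pt ` bedges B)\<^sup>*"

definition brauer_comp :: "bdiag \<Rightarrow> bdiag \<Rightarrow> bdiag" where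
  "brauer_comp B A = BDiag (bsrc A) (btgt B)
     {(p, q). p \<in> bpoints (bsrc A) (btgt B) \<and> q \<in> bpoints (bsrc A) (btgt B) \<and> p \<noteq> q \<and>
              (outer_pt p, outer_pt q) \<in> stack_conn B A}"

definition brauer_loops :: "bdiag \<Rightarrow> bdiag \<Rightarrow> nat" where
  "brauer_loops B A = card {stack_conn B A `` {Mid j} | j.
      j < btgt A \<and> stack_conn B A `` {Mid j} \<subseteq> range Mid}"

definition shift_pt :: "nat \<Rightarrow> nat \<Rightarrow> bpt \<Rightarrow> bpt" where
  "shift_pt a b p = (case p of Inl i \<Rightarrow> Inl (a + i) | Inr j \<Rightarrow> Inr (b + j))"

definition brauer_tensor :: "bdiag \<Rightarrow> bdiag \<Rightarrow> bdiag" where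
  "brauer_tensor d1 d2 = BDiag (bsrc d1 + bsrc d2) (btgt d1 + btgt d2)
     (bedges d1 \<union> map_prod (shift_pt (bsrc d1) (btgt d1)) (shift_pt (bsrc d1) (btgt d1)) ` bedges d2)"

definition bI :: bdiag where
  "bI = BDiag 1 1 {(Inl 0, Inr 0), (Inr 0, Inl 0)}"

definition bX :: bdiag where
  "bX = BDiag 2 2 {(Inl 0, Inr 1), (Inr 1, Inl 0), (Inl 1, Inr 0), (Inr 0, Inl 1)}"

definition bcap :: bdiag where
  "bcap = BDiag 2 0 {(Inl 0, Inl 1), (Inl 1, Inl 0)}"

definition bcup :: bdiag where
  "bcup = BDiag 0 2 {(Inr 0, Inr 1), (Inr 1, Inr 0)}"

fun bId :: "nat \<Rightarrow> bdiag" where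
  "bId 0 = BDiag 0 0 {}"
| "bId (Suc n) = brauer_tensor (bId n) bI"

text \<open>
  A model of the presentation of AB(delta): a K-module M (think of the direct sum of all
  Hom-spaces, composition extended by zero on non-composable pairs), with an associative
  K-bilinear composition cmp b a (= "first a, then b"), a right action
  act D B (= D \<otimes> B) of Brauer diagrams, K-linear in D and associative,
  and elements I0 (the pole), H (the generator \<bbbH>), subject to relations (i)-(iii).
  The action of a linear combination of diagrams is the linear extension; relations are
  stated on diagrams (equivalent by linearity).  An identity holds in AB(delta) iff it holds
  in every such model.\<close>

definition pb_Ir :: "('m \<Rightarrow> bdiag \<Rightarrow> 'm) \<Rightarrow> 'm \<Rightarrow> nat \<Rightarrow> 'm" where
  "pb_Ir act I0 r = act I0 (bId r)"

definition pb_X0 :: "('m \<Rightarrow> bdiag \<Rightarrow> 'm) \<Rightarrow> 'm \<Rightarrow> 'm" where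
  "pb_X0 act I0 = act I0 bX"

definition pb_H01 :: "('m \<Rightarrow> bdiag \<Rightarrow> 'm) \<Rightarrow> 'm \<Rightarrow> 'm" where
  "pb_H01 act H = act H bI"

definition pb_H02 :: "('m \<Rightarrow> 'm \<Rightarrow> 'm) \<Rightarrow> ('m \<Rightarrow> bdiag \<Rightarrow> 'm) \<Rightarrow> 'm \<Rightarrow> 'm \<Rightarrow> 'm" where
  "pb_H02 cmp act I0 H = cmp (cmp (pb_X0 act I0) (pb_H01 act H)) (pb_X0 act I0)"

text \<open>H12 = I0 \<otimes> H with H = X - cup\<circ>cap in B(delta); cup\<circ>cap = delta^(loops) (diagram).\<close>
definition pb_H12 :: "'k::comm_ring_1 \<Rightarrow> ('k \<Rightarrow> 'm::ab_group_add \<Rightarrow> 'm) \<Rightarrow>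
    ('m \<Rightarrow> bdiag \<Rightarrow> 'm) \<Rightarrow> 'm \<Rightarrow> 'm" where
  "pb_H12 \<delta> smul act I0 =
     act I0 bX - smul (\<delta> ^ brauer_loops bcup bcap) (act I0 (brauer_comp bcup bcap))"

definition pb_transp :: "('m \<Rightarrow> 'm \<Rightarrow> 'm) \<Rightarrow> ('m \<Rightarrow> bdiag \<Rightarrow> 'm) \<Rightarrow> 'm \<Rightarrow> 'm \<Rightarrow> 'm" where
  "pb_transp cmp act I0 D =
     cmp (cmp (act I0 (brauer_tensor bcap bI)) (act D bX)) (act I0 (brauer_tensor bcup bI))"

definition commutator :: "('m::ab_group_add \<Rightarrow> 'm \<Rightarrow> 'm) \<Rightarrow> 'm \<Rightarrow> 'm \<Rightarrow> 'm" where
  "commutator cmp a b = cmp a b - cmp b a"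

definition polar_brauer_model ::
  "'k::comm_ring_1 \<Rightarrow> ('k \<Rightarrow> 'm::ab_group_add \<Rightarrow> 'm) \<Rightarrow> ('m \<Rightarrow> 'm \<Rightarrow> 'm) \<Rightarrow>
   ('m \<Rightarrow> bdiag \<Rightarrow> 'm) \<Rightarrow> 'm \<Rightarrow> 'm \<Rightarrow> bool" where
  "polar_brauer_model \<delta> smul cmp act I0 H \<longleftrightarrow>
     \<comment> \<open>K-linear structure\<close>
     module smul \<and>
     (\<forall>x y z. cmp (cmp x y) z = cmp x (cmp y z)) \<and>
     (\<forall>x y z. cmp (x + y) z = cmp x z + cmp y z) \<and>
     (\<forall>x y z. cmp x (y + z) = cmp x y + cmp x z) \<and>
     (\<forall>c x y. cmp (smul c x) y = smul c (cmp x y)) \<and>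
     (\<forall>c x y. cmp x (smul c y) = smul c (cmp x y)) \<and>
     \<comment> \<open>right action of B(delta)\<close>
     (\<forall>x y B. act (x + y) B = act x B + act y B) \<and>
     (\<forall>c x B. act (smul c x) B = smul c (act x B)) \<and>
     (\<forall>x B C. is_brauer B \<longrightarrow> is_brauer C \<longrightarrow>
         act (act x B) C = act x (brauer_tensor B C)) \<and>
     \<comment> \<open>relation (i)\<close>
     (\<forall>A B. is_brauer A \<longrightarrow> is_brauer B \<longrightarrow> btgt A = bsrc B \<longrightarrow>
         cmp (act I0 B) (act I0 A) = smul (\<delta> ^ brauer_loops B A) (act I0 (brauer_comp B A)) \<and>
         cmp (act H B) (act (pb_Ir act I0 1) A) = smul (\<delta> ^ brauer_loops B A) (act H (brauer_comp B A)) \<and>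
         cmp (act (pb_Ir act I0 1) B) (act H A) = smul (\<delta> ^ brauer_loops B A) (act H (brauer_comp B A))) \<and>
     \<comment> \<open>relation (ii)\<close>
     commutator cmp (pb_H01 act H) (pb_H02 cmp act I0 H + pb_H12 \<delta> smul act I0) = 0 \<and>
     \<comment> \<open>relation (iii)\<close>
     pb_transp cmp act I0 H = - H"

end

theory Submission
  imports Defs
begin

(* Conjugation by X0 = I0 \<otimes> X is an involution on End(2), since X0 X0 = I2 acts as the identity.
   It fixes H12 = X0 - cup cap, because X absorbs cup and cap, and it exchanges H01 and
   H02 = X0 H01 X0.  Conjugating relation (ii), [H01, H02 + H12] = 0, therefore gives
   [H02, H01 + H12] = 0, and adding the two relations the terms [H01, H02] + [H02, H01] cancel,
   leaving [H01 + H02, H12] = 0. *)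

(* Connected components of stacked diagrams are given as a list of disjoint blocks (points in no
   block are singletons).  Listing each block along a path of edges makes its connectedness
   checkable by simp. *)
definition block_rel :: "'a list list \<Rightarrow> ('a \<times> 'a) set" where
  "block_rel bs = Id \<union> (\<Union>b\<in>set bs. set b \<times> set b)"

lemma distinct_concat_block_unique:
  assumes "distinct (concat bs)" "b \<in> set bs" "c \<in> set bs" "x \<in> set b" "x \<in> set c"
  shows "b = c"
  using assms by (induction bs) auto

lemma trans_block_rel:
  assumes "distinct (concat bs)"
  shows "trans (block_rel bs)"
  using distinct_concat_block_unique[OF assms] unfolding block_rel_def trans_def by blast

lemma path_block_subset_rtrancl:
  assumes "successively (\<lambda>x y. (x, y) \<in> S \<and> (y, x) \<in> S) b"
  shows "set b \<times> set b \<subseteq> S\<^sup>*"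
  using assms
proof (induction b)
  case (Cons x xs)
  show ?case
  proof (cases xs)
    case (Cons y ys)
    with Cons.prems have "(x, y) \<in> S" "(y, x) \<in> S" "set xs \<times> set xs \<subseteq> S\<^sup>*"
      using Cons.IH by auto
    with \<open>xs = y # ys\<close> show ?thesis
      by (auto intro: converse_rtrancl_into_rtrancl rtrancl_into_rtrancl)
  qed simp
qed simp

lemma rtrancl_eq_block_rel:
  assumes "S \<subseteq> block_rel bs" and "distinct (concat bs)"
    and "\<forall>b\<in>set bs. successively (\<lambda>x y. (x, y) \<in> S \<and> (y, x) \<in> S) b"
  shows "S\<^sup>* = block_rel bs"
proof -
  have "block_rel bs \<subseteq> S\<^sup>*"
    using path_block_subset_rtrancl assms(3) unfolding block_rel_def by blast
  with assms(1) have "S\<^sup>* = (block_rel bs)\<^sup>*"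
    by (rule rtrancl_subset[symmetric])
  also have "\<dots> = block_rel bs"
    using trans_block_rel[OF assms(2)]
    by (auto simp: rtrancl_trancl_reflcl block_rel_def simp del: reflcl_trancl)
  finally show ?thesis .
qed

lemma brauer_loops_eq_0_if_blocks_reach_boundary:
  assumes conn: "stack_conn B A = block_rel bs"
    and reach: "\<forall>j<btgt A. \<exists>b\<in>set bs. Mid j \<in> set b \<and> \<not> set b \<subseteq> range Mid"
  shows "brauer_loops B A = 0"
proof -
  have "\<not> stack_conn B A `` {Mid j} \<subseteq> range Mid" if "j < btgt A" for j
  proof -
    from reach that obtain b x where "b \<in> set bs" "Mid j \<in> set b" "x \<in> set b" "x \<notin> range Mid"
      by blast
    then have "x \<in> stack_conn B A `` {Mid j}" "x \<notin> range Mid"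
      unfolding conn block_rel_def by blast+
    then show ?thesis by blast
  qed
  then show ?thesis
    unfolding brauer_loops_def by (simp add: Collect_conv_if)
qed

lemma bId_1: "bId 1 = bI"
  by (auto simp: brauer_tensor_def bI_def shift_pt_def)

lemma bId_2_tensor: "bId 2 = brauer_tensor bI bI"
  by (metis bId.simps(2) bId_1 Suc_1)

lemma bId_2: "bId 2 = BDiag 2 2 {(Inl 0, Inr 0), (Inr 0, Inl 0), (Inl 1, Inr 1), (Inr 1, Inl 1)}"
  by (auto simp: numeral_2_eq_2 brauer_tensor_def bI_def shift_pt_def)

lemma bdiag_arities [simp]:
  "bsrc bI = 1" "btgt bI = 1" "bsrc bX = 2" "btgt bX = 2" "bsrc (bId 2) = 2" "btgt (bId 2) = 2"
  "bsrc bcup = 0" "btgt bcup = 2" "bsrc bcap = 2" "btgt bcap = 0"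
  by (simp_all add: bI_def bX_def bcup_def bcap_def bId_2)

lemma bpoints_2_2: "bpoints 2 2 = {Inl 0, Inl 1, Inr 0, Inr 1}"
  by (auto simp: bpoints_def numeral_2_eq_2 lessThan_Suc)

lemma inj_outer_pt: "outer_pt p = outer_pt q \<longleftrightarrow> p = q"
  by (cases p; cases q) (simp_all add: outer_pt_def)

lemma brauer_comp_eqI:
  assumes conn: "stack_conn B A = block_rel bs" and D: "is_brauer D"
    and src: "bsrc D = bsrc A" and tgt: "btgt D = btgt B"
    and edges: "\<forall>p\<in>bpoints (bsrc D) (btgt D). \<forall>q\<in>bpoints (bsrc D) (btgt D). p \<noteq> q \<longrightarrow>
           ((p, q) \<in> bedges D \<longleftrightarrow> (\<exists>b\<in>set bs. outer_pt p \<in> set b \<and> outer_pt q \<in> set b))"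
  shows "brauer_comp B A = D"
proof -
  let ?P = "bpoints (bsrc D) (btgt D)"
  have "(p, q) \<in> bedges D \<longleftrightarrow> p \<in> ?P \<and> q \<in> ?P \<and> p \<noteq> q \<and> (outer_pt p, outer_pt q) \<in> stack_conn B A"
    for p q
  proof
    assume pq: "(p, q) \<in> bedges D"
    with D have "p \<in> ?P" "q \<in> ?P" "p \<noteq> q"
      unfolding is_brauer_def by auto
    with pq edges show "p \<in> ?P \<and> q \<in> ?P \<and> p \<noteq> q \<and> (outer_pt p, outer_pt q) \<in> stack_conn B A"
      unfolding conn block_rel_def by blast
  next
    assume "p \<in> ?P \<and> q \<in> ?P \<and> p \<noteq> q \<and> (outer_pt p, outer_pt q) \<in> stack_conn B A"
    with edges inj_outer_pt show "(p, q) \<in> bedges D"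
      unfolding conn block_rel_def by auto
  qed
  with src tgt show ?thesis
    unfolding brauer_comp_def by (cases D) auto
qed

lemma is_brauer_bI: "is_brauer bI"
  by (auto simp: is_brauer_def bI_def bpoints_def)

lemma is_brauer_bX: "is_brauer bX"
  by (auto simp: is_brauer_def bX_def bpoints_2_2)

lemma is_brauer_bcup: "is_brauer bcup"
  by (auto simp: is_brauer_def bcup_def bpoints_def numeral_2_eq_2 lessThan_Suc)

lemma is_brauer_bcap: "is_brauer bcap"
  by (auto simp: is_brauer_def bcap_def bpoints_def numeral_2_eq_2 lessThan_Suc)

lemma is_brauer_bId_2: "is_brauer (bId 2)"
  by (auto simp: is_brauer_def bId_2 bpoints_2_2)

lemma stack_conn_bI_bI: "stack_conn bI bI = block_rel [[Bot 0, Mid 0, Top 0]]"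
  unfolding stack_conn_def
  by (rule rtrancl_eq_block_rel) (simp_all add: bI_def lower_pt_def upper_pt_def block_rel_def)

lemma stack_conn_bX_bX:
  "stack_conn bX bX = block_rel [[Bot 0, Mid 1, Top 0], [Bot 1, Mid 0, Top 1]]"
  unfolding stack_conn_def
  by (rule rtrancl_eq_block_rel) (simp_all add: bX_def lower_pt_def upper_pt_def block_rel_def)

lemma stack_conn_bId_2_bX:
  "stack_conn (bId 2) bX = block_rel [[Bot 0, Mid 1, Top 1], [Bot 1, Mid 0, Top 0]]"
  unfolding stack_conn_def
  by (rule rtrancl_eq_block_rel)
    (simp_all add: bId_2 bX_def lower_pt_def upper_pt_def block_rel_def)

lemma stack_conn_bX_bcup: "stack_conn bX bcup = block_rel [[Top 1, Mid 0, Mid 1, Top 0]]"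
  unfolding stack_conn_def
  by (rule rtrancl_eq_block_rel)
    (simp_all add: bX_def bcup_def lower_pt_def upper_pt_def block_rel_def)

lemma stack_conn_bcap_bX: "stack_conn bcap bX = block_rel [[Bot 0, Mid 1, Mid 0, Bot 1]]"
  unfolding stack_conn_def
  by (rule rtrancl_eq_block_rel)
    (simp_all add: bX_def bcap_def lower_pt_def upper_pt_def block_rel_def)

lemma brauer_comp_bI_bI: "brauer_comp bI bI = bI"
  by (rule brauer_comp_eqI[OF stack_conn_bI_bI is_brauer_bI])
    (simp_all add: bI_def bpoints_def lessThan_Suc outer_pt_def)

lemma brauer_comp_bX_bX: "brauer_comp bX bX = bId 2"
  by (rule brauer_comp_eqI[OF stack_conn_bX_bX is_brauer_bId_2])
    (simp_all add: bId_2 bX_def bpoints_2_2 outer_pt_def)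

lemma brauer_comp_bId_2_bX: "brauer_comp (bId 2) bX = bX"
  by (rule brauer_comp_eqI[OF stack_conn_bId_2_bX is_brauer_bX])
    (simp_all add: bId_2 bX_def bpoints_2_2 outer_pt_def)

lemma brauer_comp_bX_bcup: "brauer_comp bX bcup = bcup"
  by (rule brauer_comp_eqI[OF stack_conn_bX_bcup is_brauer_bcup])
    (simp_all add: bX_def bcup_def bpoints_def numeral_2_eq_2 lessThan_Suc outer_pt_def)

lemma brauer_comp_bcap_bX: "brauer_comp bcap bX = bcap"
  by (rule brauer_comp_eqI[OF stack_conn_bcap_bX is_brauer_bcap])
    (simp_all add: bX_def bcap_def bpoints_def numeral_2_eq_2 lessThan_Suc outer_pt_def)

lemma brauer_loops_bI_bI: "brauer_loops bI bI = 0"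
  by (rule brauer_loops_eq_0_if_blocks_reach_boundary[OF stack_conn_bI_bI])
    (simp add: bI_def image_iff)

lemma brauer_loops_bX_bX: "brauer_loops bX bX = 0"
  by (rule brauer_loops_eq_0_if_blocks_reach_boundary[OF stack_conn_bX_bX])
    (simp add: bX_def less_2_cases_iff image_iff)

lemma brauer_loops_bId_2_bX: "brauer_loops (bId 2) bX = 0"
  by (rule brauer_loops_eq_0_if_blocks_reach_boundary[OF stack_conn_bId_2_bX])
    (simp add: bX_def less_2_cases_iff image_iff)

lemma brauer_loops_bX_bcup: "brauer_loops bX bcup = 0"
  by (rule brauer_loops_eq_0_if_blocks_reach_boundary[OF stack_conn_bX_bcup])
    (simp add: bcup_def less_2_cases_iff image_iff)

lemma brauer_loops_bcap_bX: "brauer_loops bcap bX = 0"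
  by (rule brauer_loops_eq_0_if_blocks_reach_boundary[OF stack_conn_bcap_bX])
    (simp add: bX_def less_2_cases_iff image_iff)

locale assoc_bilinear =
  fixes cmp :: "'m::ab_group_add \<Rightarrow> 'm \<Rightarrow> 'm"
  assumes cmp_assoc: "cmp (cmp x y) z = cmp x (cmp y z)"
    and cmp_add_left: "cmp (x + y) z = cmp x z + cmp y z"
    and cmp_add_right: "cmp x (y + z) = cmp x y + cmp x z"
begin

lemma cmp_diff_left: "cmp (x - y) z = cmp x z - cmp y z"
  using cmp_add_left[of "x - y" y z] by (simp add: eq_diff_eq)

lemma cmp_diff_right: "cmp x (y - z) = cmp x y - cmp x z"
  using cmp_add_right[of x "y - z" z] by (simp add: eq_diff_eq)

lemma cmp_zero_left [simp]: "cmp 0 x = 0"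
  using cmp_diff_left[of 0 0 x] by simp

lemma cmp_zero_right [simp]: "cmp x 0 = 0"
  using cmp_diff_right[of x 0 0] by simp

lemma commutator_sum_conjugate:
  assumes XX: "cmp X X = P" and PA: "cmp P A = A" and AP: "cmp A P = A" and PX: "cmp P X = X"
    and XE: "cmp X E = E" and EX: "cmp E X = E"
  defines "L \<equiv> commutator cmp A (cmp (cmp X A) X + (X - E))"
  shows "commutator cmp (A + cmp (cmp X A) X) (X - E) = L + cmp X (cmp L X)"
proof -
  have XP: "cmp X P = X"
    using cmp_assoc[of X X X] XX PX by simp
  have left_mult: "cmp X (cmp X w) = cmp P w" "cmp P (cmp A w) = cmp A w"
    "cmp P (cmp X w) = cmp X w" "cmp X (cmp E w) = cmp E w" "cmp E (cmp X w) = cmp E w" for w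
    by (simp_all flip: cmp_assoc add: XX PA PX XE EX)
  have "cmp X (cmp L X) = commutator cmp (cmp (cmp X A) X) (A + (X - E))"
    unfolding L_def commutator_def
    by (simp add: cmp_diff_left cmp_diff_right cmp_add_left cmp_add_right cmp_assoc
        XX AP XP XE EX left_mult)
  then show ?thesis
    unfolding L_def commutator_def
    by (simp add: cmp_diff_left cmp_diff_right cmp_add_left cmp_add_right algebra_simps)
qed

end

locale polar_brauer =
  fixes \<delta> :: "'k::comm_ring_1"
    and smul :: "'k \<Rightarrow> 'm::ab_group_add \<Rightarrow> 'm"
    and cmp :: "'m \<Rightarrow> 'm \<Rightarrow> 'm"
    and act :: "'m \<Rightarrow> bdiag \<Rightarrow> 'm"
    and I0 H :: 'm
  assumes model: "polar_brauer_model \<delta> smul cmp act I0 H"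

sublocale polar_brauer \<subseteq> assoc_bilinear cmp
  using model unfolding polar_brauer_model_def by unfold_locales auto

context polar_brauer
begin

lemma smul_one: "smul 1 x = x"
proof -
  have "module smul"
    using model unfolding polar_brauer_model_def by blast
  then show ?thesis
    by (rule module.scale_one)
qed

lemma act_act:
  "is_brauer B \<Longrightarrow> is_brauer C \<Longrightarrow> act (act x B) C = act x (brauer_tensor B C)"
  using model unfolding polar_brauer_model_def by blast

lemma commutator_H01_H02_plus_H12:
  "commutator cmp (pb_H01 act H) (pb_H02 cmp act I0 H + pb_H12 \<delta> smul act I0) = 0"
  using model unfolding polar_brauer_model_def by blast

lemma pb_Ir_1: "pb_Ir act I0 1 = act I0 bI"
  unfolding pb_Ir_def bId_1 ..

lemma cmp_pole_diagrams:
  assumes "is_brauer A" "is_brauer B" "btgt A = bsrc B"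
  shows "cmp (act I0 B) (act I0 A) = smul (\<delta> ^ brauer_loops B A) (act I0 (brauer_comp B A))"
  using model assms unfolding polar_brauer_model_def by blast

lemma cmp_pole_diagrams_no_loops:
  assumes "is_brauer A" "is_brauer B" "btgt A = bsrc B" "brauer_loops B A = 0"
  shows "cmp (act I0 B) (act I0 A) = act I0 (brauer_comp B A)"
  using cmp_pole_diagrams[OF assms(1-3)] assms(4) by (simp add: smul_one)

lemma cmp_H_diagram_left_no_loops:
  assumes "is_brauer A" "is_brauer B" "btgt A = bsrc B" "brauer_loops B A = 0"
  shows "cmp (act H B) (act (act I0 bI) A) = act H (brauer_comp B A)"
  using model assms unfolding polar_brauer_model_def pb_Ir_1 by (simp add: smul_one)

lemma cmp_H_diagram_right_no_loops:
  assumes "is_brauer A" "is_brauer B" "btgt A = bsrc B" "brauer_loops B A = 0"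
  shows "cmp (act (act I0 bI) B) (act H A) = act H (brauer_comp B A)"
  using model assms unfolding polar_brauer_model_def pb_Ir_1 by (simp add: smul_one)

lemma pb_Ir_2: "pb_Ir act I0 2 = act (act I0 bI) bI"
  using act_act[OF is_brauer_bI is_brauer_bI] by (simp add: pb_Ir_def bId_2_tensor del: bId.simps)

lemma cmp_X0_X0: "cmp (pb_X0 act I0) (pb_X0 act I0) = pb_Ir act I0 2"
  unfolding pb_X0_def pb_Ir_def
  by (simp add: cmp_pole_diagrams_no_loops is_brauer_bX brauer_loops_bX_bX brauer_comp_bX_bX)

lemma cmp_Ir2_X0: "cmp (pb_Ir act I0 2) (pb_X0 act I0) = pb_X0 act I0"
  unfolding pb_X0_def pb_Ir_def
  by (simp add: cmp_pole_diagrams_no_loops is_brauer_bX is_brauer_bId_2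
      brauer_loops_bId_2_bX brauer_comp_bId_2_bX)

lemma cmp_H01_Ir2: "cmp (pb_H01 act H) (pb_Ir act I0 2) = pb_H01 act H"
  unfolding pb_H01_def pb_Ir_2
  by (simp add: cmp_H_diagram_left_no_loops is_brauer_bI brauer_loops_bI_bI brauer_comp_bI_bI)

lemma cmp_Ir2_H01: "cmp (pb_Ir act I0 2) (pb_H01 act H) = pb_H01 act H"
  unfolding pb_H01_def pb_Ir_2
  by (simp add: cmp_H_diagram_right_no_loops is_brauer_bI brauer_loops_bI_bI brauer_comp_bI_bI)

lemma H12_eq_X0_minus_cup_cap:
  "pb_H12 \<delta> smul act I0 = pb_X0 act I0 - cmp (act I0 bcup) (act I0 bcap)"
  unfolding pb_H12_def pb_X0_def
  by (simp add: cmp_pole_diagrams is_brauer_bcup is_brauer_bcap)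

lemma cmp_X0_cup_cap:
  "cmp (pb_X0 act I0) (cmp (act I0 bcup) (act I0 bcap)) = cmp (act I0 bcup) (act I0 bcap)"
  unfolding pb_X0_def
  by (simp flip: cmp_assoc add: cmp_pole_diagrams_no_loops is_brauer_bX is_brauer_bcup
      brauer_loops_bX_bcup brauer_comp_bX_bcup)

lemma cmp_cup_cap_X0:
  "cmp (cmp (act I0 bcup) (act I0 bcap)) (pb_X0 act I0) = cmp (act I0 bcup) (act I0 bcap)"
  unfolding pb_X0_def
  by (simp add: cmp_assoc cmp_pole_diagrams_no_loops is_brauer_bX is_brauer_bcap
      brauer_loops_bcap_bX brauer_comp_bcap_bX)

end

theorem lemma2p10:
  fixes \<delta> :: "'k::comm_ring_1"
    and smul :: "'k \<Rightarrow> 'm::ab_group_add \<Rightarrow> 'm"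
    and cmp :: "'m \<Rightarrow> 'm \<Rightarrow> 'm"
    and act :: "'m \<Rightarrow> bdiag \<Rightarrow> 'm"
    and I0 H :: 'm
  assumes "polar_brauer_model \<delta> smul cmp act I0 H"
  shows "commutator cmp (pb_H01 act H + pb_H02 cmp act I0 H) (pb_H12 \<delta> smul act I0) = 0"
proof -
  interpret polar_brauer \<delta> smul cmp act I0 H
    by (rule polar_brauer.intro) (fact assms)
  have "commutator cmp (pb_H01 act H + pb_H02 cmp act I0 H) (pb_H12 \<delta> smul act I0) =
      commutator cmp (pb_H01 act H) (pb_H02 cmp act I0 H + pb_H12 \<delta> smul act I0) +
      cmp (pb_X0 act I0)
        (cmp (commutator cmp (pb_H01 act H) (pb_H02 cmp act I0 H + pb_H12 \<delta> smul act I0))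
          (pb_X0 act I0))"
    unfolding H12_eq_X0_minus_cup_cap pb_H02_def
    by (rule commutator_sum_conjugate[OF cmp_X0_X0 cmp_Ir2_H01 cmp_H01_Ir2 cmp_Ir2_X0
          cmp_X0_cup_cap cmp_cup_cap_X0])
  then show ?thesis
    by (simp add: commutator_H01_H02_plus_H12)
qed

end
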